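(* Let $C$ be a subadditive monotone normalized cost function. Then for every profile of (monotone, normalized) valuations and every tie-breaking rule among profit-maximizing bundles, the allocation $\overrightarrow{ALG}$ produced by the Sequential Mechanism satisfies $\pi(\overrightarrow{ALG})\le n\cdot\pi(\overrightarrow{OPT})$, where $\overrightarrow{OPT}$ minimizes the social cost.
   Context: Setting. $N=\{1,\dots,n\}$ is a set of players and $M_1,\dots,M_n$ are pairwise disjoint finite sets; $M=\bigcup_i M_i$; allocations $\vec S=(S_1,\dots,S_n)$ with $S_i\subseteq M_i$ are identified with subsets of $M$. A cost function is a monotone $C:2^M\to\mathbb{R}_{\ge0}$ with $C(\emptyset)=0$; subadditive: $C(S)+C(T)\ge C(S\cup T)$. Valuations $v_i:2^{M_i}\to\mathbb{R}_{\ge0}$ are monotone with $v_i(\emptyset)=0$. Sequential Mechanism (with a given tie-breaking rule): start with $ALG_i=\emptyset$ for all $i$; for $i=1,\dots,n$ in order, set $ALG_i$ to some element of $\arg\max_{S\subseteq M_i}v_i(S)-[C(\overrightarrow{ALG}\cup S)-C(\overrightarrow{ALG})]$ (with $\overrightarrow{ALG}$ the current allocation of players $1,\dots,i-1$), and charge $p_i=C(ALG_1,\dots,ALG_i)-C(ALG_1,\dots,ALG_{i-1})$. Social cost: $\pi(\vec S)=C(\vec S)+\sum_i[v_i(M_i)-v_i(S_i)]$. *)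

theory Defs
  imports Complex_Main
begin

definition ground :: "nat \<Rightarrow> (nat \<Rightarrow> 'a set) \<Rightarrow> 'a set" where
  "ground n M = (\<Union>i\<in>{1..n}. M i)"

definition is_allocation :: "nat \<Rightarrow> (nat \<Rightarrow> 'a set) \<Rightarrow> (nat \<Rightarrow> 'a set) \<Rightarrow> bool" where
  "is_allocation n M S \<longleftrightarrow> (\<forall>i\<in>{1..n}. S i \<subseteq> M i)"

definition alloc_set :: "nat \<Rightarrow> (nat \<Rightarrow> 'a set) \<Rightarrow> 'a set" where
  "alloc_set n S = (\<Union>i\<in>{1..n}. S i)"

definition cost_function :: "'a set \<Rightarrow> ('a set \<Rightarrow> real) \<Rightarrow> bool" where
  "cost_function Mg C \<longleftrightarrow> C {} = 0 \<and> (\<forall>S \<subseteq> Mg. C S \<ge> 0)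
     \<and> (\<forall>S T. S \<subseteq> T \<and> T \<subseteq> Mg \<longrightarrow> C S \<le> C T)"

definition subadditive :: "'a set \<Rightarrow> ('a set \<Rightarrow> real) \<Rightarrow> bool" where
  "subadditive Mg C \<longleftrightarrow> (\<forall>S T. S \<subseteq> Mg \<and> T \<subseteq> Mg \<longrightarrow> C (S \<union> T) \<le> C S + C T)"

definition valuation :: "'a set \<Rightarrow> ('a set \<Rightarrow> real) \<Rightarrow> bool" where
  "valuation Mi v \<longleftrightarrow> v {} = 0 \<and> (\<forall>S \<subseteq> Mi. v S \<ge> 0)
     \<and> (\<forall>S T. S \<subseteq> T \<and> T \<subseteq> Mi \<longrightarrow> v S \<le> v T)"

definition social_cost ::
  "nat \<Rightarrow> (nat \<Rightarrow> 'a set) \<Rightarrow> ('a set \<Rightarrow> real) \<Rightarrow> (nat \<Rightarrow> 'a set \<Rightarrow> real) \<Rightarrow> (nat \<Rightarrow> 'a set) \<Rightarrow> real" where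
  "social_cost n M C v S = C (alloc_set n S) + (\<Sum>i\<in>{1..n}. v i (M i) - v i (S i))"

text \<open>An outcome of the Sequential Mechanism under SOME tie-breaking rule:
  each player i (in order 1..n) receives a profit-maximizing bundle given the
  allocation of players 1..i-1. Quantifying over all such ALG covers every
  tie-breaking rule.\<close>
definition sequential_outcome ::
  "nat \<Rightarrow> (nat \<Rightarrow> 'a set) \<Rightarrow> ('a set \<Rightarrow> real) \<Rightarrow> (nat \<Rightarrow> 'a set \<Rightarrow> real) \<Rightarrow> (nat \<Rightarrow> 'a set) \<Rightarrow> bool" where
  "sequential_outcome n M C v ALG \<longleftrightarrow>
     (\<forall>i\<in>{1..n}. ALG i \<subseteq> M i \<and>
        (let P = (\<Union>j\<in>{1..<i}. ALG j) in
          \<forall>S \<subseteq> M i. v i S - (C (P \<union> S) - C P) \<le> v i (ALG i) - (C (P \<union> ALG i) - C P)))"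

end

theory Submission
  imports Defs
begin

text \<open>The social cost of an allocation telescopes into a sum over the players of
  the value player i leaves unserved plus the marginal cost of its bundle on top of
  the bundles of players 1..i-1. In the sequential outcome each summand is at most
  what player i would incur by taking its bundle S i from a competing allocation S
  instead; by subadditivity that marginal cost is at most C (S i), and by
  monotonicity the unserved value of i plus C (S i) is at most the social cost of S.
  Summing the n summands gives the factor n.\<close>

definition alloc_prefix :: "(nat \<Rightarrow> 'a set) \<Rightarrow> nat \<Rightarrow> 'a set" where
  "alloc_prefix S i = (\<Union>j\<in>{1..<i}. S j)"

definition marginal_cost :: "('a set \<Rightarrow> real) \<Rightarrow> 'a set \<Rightarrow> 'a set \<Rightarrow> real" where
  "marginal_cost C P S = C (P \<union> S) - C P"

lemma alloc_prefix_Suc: "1 \<le> i \<Longrightarrow> alloc_prefix S (Suc i) = alloc_prefix S i \<union> S i"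
  unfolding alloc_prefix_def by (auto simp: less_Suc_eq)

lemma alloc_prefix_subset_ground:
  assumes "is_allocation n M S" and "i \<le> Suc n"
  shows "alloc_prefix S i \<subseteq> ground n M"
  using assms unfolding alloc_prefix_def is_allocation_def ground_def by fastforce

lemma alloc_set_subset_ground: "is_allocation n M S \<Longrightarrow> alloc_set n S \<subseteq> ground n M"
  unfolding alloc_set_def is_allocation_def ground_def by fastforce

lemma cost_alloc_set_telescope:
  assumes "C {} = 0"
  shows "C (alloc_set n S) = (\<Sum>i=1..n. marginal_cost C (alloc_prefix S i) (S i))"
proof -
  have "(\<Sum>i=1..n. marginal_cost C (alloc_prefix S i) (S i))
      = (\<Sum>i=1..n. C (alloc_prefix S (Suc i)) - C (alloc_prefix S i))"
    by (rule sum.cong) (simp_all add: marginal_cost_def alloc_prefix_Suc)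
  also have "\<dots> = C (alloc_prefix S (Suc n)) - C (alloc_prefix S 1)"
    by (rule sum_Suc_diff) simp
  also have "\<dots> = C (alloc_set n S)"
    using assms unfolding alloc_prefix_def alloc_set_def by (simp add: atLeastLessThanSuc_atLeastAtMost)
  finally show ?thesis ..
qed

lemma social_cost_eq_sum_marginal:
  assumes "C {} = 0"
  shows "social_cost n M C v S
    = (\<Sum>i=1..n. v i (M i) - v i (S i) + marginal_cost C (alloc_prefix S i) (S i))"
  unfolding social_cost_def cost_alloc_set_telescope[of C, OF assms] by (simp add: sum.distrib)

lemma sequential_outcome_alloc:
  "sequential_outcome n M C v ALG \<Longrightarrow> is_allocation n M ALG"
  unfolding sequential_outcome_def is_allocation_def by auto

lemma sequential_outcome_best_response:
  assumes "sequential_outcome n M C v ALG" and "i \<in> {1..n}" and "T \<subseteq> M i"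
  shows "v i (M i) - v i (ALG i) + marginal_cost C (alloc_prefix ALG i) (ALG i)
    \<le> v i (M i) - v i T + marginal_cost C (alloc_prefix ALG i) T"
proof -
  have "v i T - (C (alloc_prefix ALG i \<union> T) - C (alloc_prefix ALG i))
      \<le> v i (ALG i) - (C (alloc_prefix ALG i \<union> ALG i) - C (alloc_prefix ALG i))"
    using assms unfolding sequential_outcome_def alloc_prefix_def Let_def by auto
  then show ?thesis unfolding marginal_cost_def by linarith
qed

lemma marginal_cost_le_cost:
  assumes "subadditive Mg C" and "P \<subseteq> Mg" and "T \<subseteq> Mg"
  shows "marginal_cost C P T \<le> C T"
proof -
  have "C (P \<union> T) \<le> C P + C T" using assms unfolding subadditive_def by blast
  then show ?thesis unfolding marginal_cost_def by linarith
qed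

lemma player_cost_le_social_cost:
  assumes "cost_function (ground n M) C" and "\<forall>j\<in>{1..n}. valuation (M j) (v j)"
    and "is_allocation n M S" and "i \<in> {1..n}"
  shows "v i (M i) - v i (S i) + C (S i) \<le> social_cost n M C v S"
proof -
  have "S i \<subseteq> alloc_set n S" using assms(4) unfolding alloc_set_def by blast
  then have "C (S i) \<le> C (alloc_set n S)"
    using assms(1) alloc_set_subset_ground[OF assms(3)] unfolding cost_function_def by blast
  moreover have "v i (M i) - v i (S i) \<le> (\<Sum>j\<in>{1..n}. v j (M j) - v j (S j))"
  proof (rule member_le_sum[OF assms(4)])
    fix j assume j: "j \<in> {1..n} - {i}"
    then have "S j \<subseteq> M j" and "valuation (M j) (v j)"
      using assms(2,3) unfolding is_allocation_def by auto
    then show "0 \<le> v j (M j) - v j (S j)" unfolding valuation_def by simp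
  qed simp
  ultimately show ?thesis unfolding social_cost_def by linarith
qed

lemma sequential_summand_le_social_cost:
  assumes cost: "cost_function (ground n M) C" and subadd: "subadditive (ground n M) C"
    and vals: "\<forall>j\<in>{1..n}. valuation (M j) (v j)"
    and alg: "sequential_outcome n M C v ALG"
    and S: "is_allocation n M S" and i: "i \<in> {1..n}"
  shows "v i (M i) - v i (ALG i) + marginal_cost C (alloc_prefix ALG i) (ALG i)
    \<le> social_cost n M C v S"
proof -
  have S_i: "S i \<subseteq> M i" using S i unfolding is_allocation_def by blast
  have "marginal_cost C (alloc_prefix ALG i) (S i) \<le> C (S i)"
  proof (rule marginal_cost_le_cost[OF subadd])
    show "alloc_prefix ALG i \<subseteq> ground n M"
      using i by (intro alloc_prefix_subset_ground[OF sequential_outcome_alloc[OF alg]]) simp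
    show "S i \<subseteq> ground n M" using i S_i unfolding ground_def by blast
  qed
  then show ?thesis
    using sequential_outcome_best_response[OF alg i S_i]
      player_cost_le_social_cost[OF cost vals S i] by linarith
qed

lemma sequential_outcome_social_cost_le:
  assumes cost: "cost_function (ground n M) C" and subadd: "subadditive (ground n M) C"
    and vals: "\<forall>j\<in>{1..n}. valuation (M j) (v j)"
    and alg: "sequential_outcome n M C v ALG"
    and S: "is_allocation n M S"
  shows "social_cost n M C v ALG \<le> real n * social_cost n M C v S"
proof -
  have "C {} = 0" using cost unfolding cost_function_def by blast
  then have "social_cost n M C v ALG
      = (\<Sum>i=1..n. v i (M i) - v i (ALG i) + marginal_cost C (alloc_prefix ALG i) (ALG i))"
    by (rule social_cost_eq_sum_marginal)
  also have "\<dots> \<le> (\<Sum>i=1..n. social_cost n M C v S)"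
    by (rule sum_mono) (rule sequential_summand_le_social_cost[OF cost subadd vals alg S])
  finally show ?thesis by simp
qed

theorem lemma7p3:
  fixes n :: nat and M :: "nat \<Rightarrow> 'a set" and C :: "'a set \<Rightarrow> real"
    and v :: "nat \<Rightarrow> 'a set \<Rightarrow> real" and ALG OPT :: "nat \<Rightarrow> 'a set"
  assumes finM: "\<forall>i\<in>{1..n}. finite (M i)"
    and disj: "\<forall>i\<in>{1..n}. \<forall>j\<in>{1..n}. i \<noteq> j \<longrightarrow> M i \<inter> M j = {}"
    and cost: "cost_function (ground n M) C"
    and subadd: "subadditive (ground n M) C"
    and vals: "\<forall>i\<in>{1..n}. valuation (M i) (v i)"
    and alg: "sequential_outcome n M C v ALG"
    and opt_alloc: "is_allocation n M OPT"
    and opt_min: "\<forall>S. is_allocation n M S \<longrightarrow> social_cost n M C v OPT \<le> social_cost n M C v S"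
  shows "social_cost n M C v ALG \<le> real n * social_cost n M C v OPT"
  using cost subadd vals alg opt_alloc by (rule sequential_outcome_social_cost_le)

end
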